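(* For any oriented graph $G$, $\omega_{ro}(G) \leq \chi^*_o(G) \leq \chi_o(G)$.
   Context: An oriented graph is a finite directed graph with no directed cycle of length 1 or 2. A homomorphism of an oriented graph $G$ to an oriented graph $H$ is a map $f:V(G)\to V(H)$ such that $f(x)f(y)$ is an arc of $H$ whenever $xy$ is an arc of $G$. An oriented relative clique of $G$ is a set $R\subseteq V(G)$ such that $f(x)\neq f(y)$ for every homomorphism $f$ of $G$ to any oriented graph and all distinct $x,y\in R$; $\omega_{ro}(G)$ is the maximum size of an oriented relative clique. For a set $S$ of $k$ colors, a $b$-fold oriented $k$-coloring of $G$ is a map $f$ from $V(G)$ to the $b$-element subsets of $S$ such that (i) $f(x)\cap f(y)=\emptyset$ for every arc $xy$, and (ii) for all arcs $xy, zw$, $f(x)\cap f(w)\neq\emptyset$ implies $f(y)\cap f(z)=\emptyset$. $\chi^b_o(G)$ is the minimum $k$ admitting such a coloring; $\chi_o(G)=\chi^1_o(G)$ is the oriented chromatic number, and $\chi^*_o(G)=\lim_{b\to\infty}\chi^b_o(G)/b=\inf_{b\ge1}\chi^b_o(G)/b$ is the fractional oriented chromatic number. *)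

theory Defs
  imports Complex_Main
begin

definition oriented :: "'a set \<Rightarrow> ('a \<times> 'a) set \<Rightarrow> bool" where
  "oriented V A \<longleftrightarrow> finite V \<and> A \<subseteq> V \<times> V \<and> (\<forall>x. (x, x) \<notin> A)
     \<and> (\<forall>x y. (x, y) \<in> A \<longrightarrow> (y, x) \<notin> A)"

definition ohom :: "'a set \<Rightarrow> ('a \<times> 'a) set \<Rightarrow> 'b set \<Rightarrow> ('b \<times> 'b) set \<Rightarrow> ('a \<Rightarrow> 'b) \<Rightarrow> bool" where
  "ohom V A W B f \<longleftrightarrow> (\<forall>x\<in>V. f x \<in> W) \<and> (\<forall>(x, y)\<in>A. (f x, f y) \<in> B)"

text \<open>Target oriented graphs are taken with vertices in nat;
  since G is finite, every homomorphic image is finite and embeds into nat, so this is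
  equivalent to quantifying over all oriented graphs.\<close>
definition relative_clique :: "'a set \<Rightarrow> ('a \<times> 'a) set \<Rightarrow> 'a set \<Rightarrow> bool" where
  "relative_clique V A R \<longleftrightarrow> R \<subseteq> V \<and>
     (\<forall>(W :: nat set) B f. oriented W B \<and> ohom V A W B f \<longrightarrow> inj_on f R)"

definition omega_ro :: "'a set \<Rightarrow> ('a \<times> 'a) set \<Rightarrow> nat" where
  "omega_ro V A = Max {card R | R. relative_clique V A R}"

definition bfold_coloring :: "'a set \<Rightarrow> ('a \<times> 'a) set \<Rightarrow> nat \<Rightarrow> nat \<Rightarrow> ('a \<Rightarrow> nat set) \<Rightarrow> bool" where
  "bfold_coloring V A b k f \<longleftrightarrow>
     (\<forall>x\<in>V. f x \<subseteq> {..<k} \<and> card (f x) = b)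
     \<and> (\<forall>(x, y)\<in>A. f x \<inter> f y = {})
     \<and> (\<forall>(x, y)\<in>A. \<forall>(z, w)\<in>A. f x \<inter> f w \<noteq> {} \<longrightarrow> f y \<inter> f z = {})"

definition chi_b :: "'a set \<Rightarrow> ('a \<times> 'a) set \<Rightarrow> nat \<Rightarrow> nat" where
  "chi_b V A b = (LEAST k. \<exists>f. bfold_coloring V A b k f)"

definition chi_o :: "'a set \<Rightarrow> ('a \<times> 'a) set \<Rightarrow> nat" where
  "chi_o V A = chi_b V A 1"

definition chi_frac :: "'a set \<Rightarrow> ('a \<times> 'a) set \<Rightarrow> real" where
  "chi_frac V A = (INF b\<in>{1..}. real (chi_b V A b) / real b)"

end

theory Submission
  imports Defs
begin

text \<open>A \<open>b\<close>-fold colouring \<open>f\<close> induces an oriented graph on the colours, with an arc \<open>p q\<close>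
  whenever some arc \<open>u w\<close> has \<open>p \<in> f u\<close> and \<open>q \<in> f w\<close>: condition (i) excludes loops and
  condition (ii) excludes 2-cycles. Choosing one colour per vertex is a homomorphism into this
  graph, so two vertices of a relative clique cannot share a colour (choose it for both). The
  colour sets of a relative clique \<open>R\<close> are therefore pairwise disjoint, whence
  \<open>|R| b \<le> \<chi>\<^sup>b\<^sub>o\<close>. The upper bound is the term \<open>b = 1\<close> of the infimum.\<close>

definition color_digraph :: "('a \<times> 'a) set \<Rightarrow> ('a \<Rightarrow> nat set) \<Rightarrow> (nat \<times> nat) set" where
  "color_digraph A f = {(p, q). \<exists>(u, w)\<in>A. p \<in> f u \<and> q \<in> f w}"

lemma oriented_color_digraph:
  assumes "A \<subseteq> V \<times> V" and "bfold_coloring V A b k f"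
  shows "oriented {..<k} (color_digraph A f)"
  unfolding oriented_def
proof (intro conjI allI impI)
  show "color_digraph A f \<subseteq> {..<k} \<times> {..<k}"
    using assms unfolding color_digraph_def bfold_coloring_def by blast
  show "(p, p) \<notin> color_digraph A f" for p
    using assms unfolding color_digraph_def bfold_coloring_def by blast
  show "(q, p) \<notin> color_digraph A f" if "(p, q) \<in> color_digraph A f" for p q
    using assms that unfolding color_digraph_def bfold_coloring_def by blast
qed simp

lemma ohom_color_digraph:
  assumes "A \<subseteq> V \<times> V" and "bfold_coloring V A b k f" and "\<And>v. v \<in> V \<Longrightarrow> g v \<in> f v"
  shows "ohom V A {..<k} (color_digraph A f) g"
  using assms unfolding ohom_def color_digraph_def bfold_coloring_def by blast

lemma relative_clique_colors_disjoint:
  assumes "oriented V A" and "relative_clique V A R" and col: "bfold_coloring V A b k f"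
    and "x \<in> R" "y \<in> R" "x \<noteq> y"
  shows "f x \<inter> f y = {}"
proof (rule ccontr)
  assume "f x \<inter> f y \<noteq> {}"
  then obtain c where c: "c \<in> f x" "c \<in> f y" by blast
  have RV: "R \<subseteq> V" and AV: "A \<subseteq> V \<times> V"
    using assms unfolding relative_clique_def oriented_def by auto
  have "finite (f x)" and "card (f x) = b"
    using col \<open>x \<in> R\<close> RV finite_subset unfolding bfold_coloring_def by auto
  with c have "b > 0" by (cases "b = 0") auto
  then have nonempty: "f v \<noteq> {}" if "v \<in> V" for v
    using col that unfolding bfold_coloring_def by fastforce
  define g where "g v = (if v = x \<or> v = y then c else (SOME d. d \<in> f v))" for v
  have "g v \<in> f v" if "v \<in> V" for v
    using c nonempty[OF that] by (auto simp: g_def intro: someI_ex)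
  then have "ohom V A {..<k} (color_digraph A f) g"
    using ohom_color_digraph[OF AV col] by blast
  with oriented_color_digraph[OF AV col] \<open>relative_clique V A R\<close> have "inj_on g R"
    unfolding relative_clique_def by blast
  moreover have "g x = g y" by (simp add: g_def)
  ultimately show False using \<open>x \<in> R\<close> \<open>y \<in> R\<close> \<open>x \<noteq> y\<close> by (meson inj_onD)
qed

lemma card_relative_clique_mult_le:
  assumes "oriented V A" and "relative_clique V A R" and col: "bfold_coloring V A b k f"
  shows "card R * b \<le> k"
proof -
  have RV: "R \<subseteq> V" and "finite V"
    using assms unfolding relative_clique_def oriented_def by auto
  then have "finite R" by (rule finite_subset)
  have colors: "f v \<subseteq> {..<k}" "card (f v) = b" if "v \<in> R" for v
    using col RV that unfolding bfold_coloring_def by auto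
  then have "finite (f v)" if "v \<in> R" for v
    using that finite_subset by blast
  then have "card (\<Union>(f ` R)) = (\<Sum>v\<in>R. card (f v))"
    using \<open>finite R\<close> relative_clique_colors_disjoint[OF assms] by (intro card_UN_disjoint) auto
  also have "\<dots> = card R * b" using colors by simp
  finally have "card R * b = card (\<Union>(f ` R))" ..
  also have "\<dots> \<le> card {..<k}" using colors by (intro card_mono) auto
  finally show ?thesis by simp
qed

lemma bfold_coloring_if_disjoint:
  assumes "oriented V A" and "\<And>v. v \<in> V \<Longrightarrow> f v \<subseteq> {..<k} \<and> card (f v) = b"
    and disjoint: "\<And>u w. u \<in> V \<Longrightarrow> w \<in> V \<Longrightarrow> u \<noteq> w \<Longrightarrow> f u \<inter> f w = {}"
  shows "bfold_coloring V A b k f"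
proof -
  have AV: "A \<subseteq> V \<times> V" and no_loop: "(x, x) \<notin> A" and no_digon: "(x, y) \<in> A \<Longrightarrow> (y, x) \<notin> A"
    for x y
    using \<open>oriented V A\<close> unfolding oriented_def by auto
  have "f x \<inter> f y = {}" if "(x, y) \<in> A" for x y
    using disjoint[of x y] no_loop[of x] that AV by blast
  moreover have "f y \<inter> f z = {}" if "(x, y) \<in> A" "(z, w) \<in> A" "f x \<inter> f w \<noteq> {}" for x y z w
  proof -
    have "x = w" using disjoint[of x w] that AV by blast
    then show ?thesis using disjoint[of y z] no_digon that AV by blast
  qed
  ultimately show ?thesis
    unfolding bfold_coloring_def using assms(2) by blast
qed

lemma blocks_disjoint:
  fixes i j b :: nat
  assumes "i \<noteq> j"
  shows "{i * b..<i * b + b} \<inter> {j * b..<j * b + b} = {}"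
proof -
  have "m * b + b \<le> n * b" if "m < n" for m n :: nat
    using mult_le_mono1[of "Suc m" n b] that by simp
  then show ?thesis using assms by (cases "i < j") (fastforce simp: linorder_neq_iff)+
qed

lemma bfold_coloring_exists:
  assumes "oriented V A"
  shows "\<exists>k f. bfold_coloring V A b k f"
proof -
  obtain idx where idx: "bij_betw idx V {..<card V}"
    using assms ex_bij_betw_finite_nat unfolding oriented_def by (metis atLeast0LessThan)
  define f where "f v = {idx v * b..<idx v * b + b}" for v
  have "f v \<subseteq> {..<card V * b}" if "v \<in> V" for v
    using mult_le_mono1[of "Suc (idx v)" "card V" b] bij_betwE[OF idx] that
    by (auto simp: f_def)
  moreover have "f u \<inter> f w = {}" if "u \<in> V" "w \<in> V" "u \<noteq> w" for u w
    using blocks_disjoint bij_betw_imp_inj_on[OF idx] that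
    unfolding f_def by (metis inj_onD)
  ultimately have "bfold_coloring V A b (card V * b) f"
    by (intro bfold_coloring_if_disjoint[OF assms]) (auto simp: f_def)
  then show ?thesis by blast
qed

lemma bfold_coloring_chi_b:
  assumes "oriented V A"
  shows "\<exists>f. bfold_coloring V A b (chi_b V A b) f"
  unfolding chi_b_def using bfold_coloring_exists[OF assms] by (rule LeastI_ex)

lemma omega_ro_attained:
  assumes "oriented V A"
  obtains R where "relative_clique V A R" and "card R = omega_ro V A"
proof -
  let ?S = "{card R | R. relative_clique V A R}"
  have "?S \<subseteq> {..card V}"
    using assms by (auto simp: relative_clique_def oriented_def card_mono)
  then have "finite ?S" by (rule finite_subset) simp
  moreover have "relative_clique V A {}" unfolding relative_clique_def by simp
  then have "?S \<noteq> {}" by blast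
  ultimately have "omega_ro V A \<in> ?S" unfolding omega_ro_def by (rule Max_in)
  then show ?thesis using that by auto
qed

lemma omega_ro_mult_le_chi_b:
  assumes "oriented V A"
  shows "omega_ro V A * b \<le> chi_b V A b"
proof -
  obtain R where "relative_clique V A R" and "card R = omega_ro V A"
    using omega_ro_attained[OF assms] .
  moreover obtain f where "bfold_coloring V A b (chi_b V A b) f"
    using bfold_coloring_chi_b[OF assms] ..
  ultimately show ?thesis using card_relative_clique_mult_le[OF assms] by metis
qed

theorem theorem3:
  fixes V :: "'a set" and A :: "('a \<times> 'a) set"
  assumes "oriented V A"
  shows "real (omega_ro V A) \<le> chi_frac V A \<and> chi_frac V A \<le> real (chi_o V A)"
proof
  have "bdd_below ((\<lambda>b. real (chi_b V A b) / real b) ` {1..})"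
    by (rule bdd_belowI[where m = 0]) auto
  from cINF_lower[OF this, of 1] show "chi_frac V A \<le> real (chi_o V A)"
    unfolding chi_frac_def chi_o_def by simp
  show "real (omega_ro V A) \<le> chi_frac V A"
    unfolding chi_frac_def
  proof (rule cINF_greatest)
    fix b :: nat
    assume "b \<in> {1..}"
    moreover have "real (omega_ro V A) * real b \<le> real (chi_b V A b)"
      using omega_ro_mult_le_chi_b[OF assms] by (metis of_nat_le_iff of_nat_mult)
    ultimately show "real (omega_ro V A) \<le> real (chi_b V A b) / real b"
      by (simp add: pos_le_divide_eq)
  qed simp
qed

end
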